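(* Let $W$ be the group of real $6\times 6$ matrices generated by the orthogonal reflections of $\mathbb R^6$ across the hyperplanes orthogonal to the following $30$ vectors: the $6$ coordinate vectors $e_{ij}$, and the $24$ vectors $e_a\pm e_b\pm e_c\pm e_f$ where $\{a,b,c,f\}$ is the edge set of a $4$-cycle in $K_4$ (i.e., the complement of a perfect matching). Then $W$ has order $23040$, is isomorphic to the Weyl group $D_6$, and leaves the variety $L_{2,4}$ invariant.
   Context: Coordinates of $\mathbb R^6\subset\mathbb C^6$ are indexed by the six edges of $K_4$, with standard basis vectors $e_{ij}$ and the standard Euclidean inner product. $L_{2,4}\subset\mathbb C^6$ is the set of $l$ such that $(l_{ij}^2)$ equals $(\sum_{k=1}^2({\bf p}_i^k-{\bf p}_j^k)^2)$ for some complex configuration ${\bf p}_1,\dots,{\bf p}_4\in\mathbb C^2$; equivalently the hypersurface cut out by the determinant of the symmetric $3\times3$ matrix with diagonal $2l_{14}^2,2l_{24}^2,2l_{34}^2$ and off-diagonal entries $l_{14}^2+l_{24}^2-l_{12}^2$, $l_{14}^2+l_{34}^2-l_{13}^2$, $l_{24}^2+l_{34}^2-l_{23}^2$. *)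

theory Defs
  imports "HOL-Analysis.Analysis" "HOL-Library.Numeral_Type"
begin

text \<open>The six edges of K4 on vertices 1,2,3,4; Eij is the edge {i,j}.\<close>
datatype edge = E12 | E13 | E14 | E23 | E24 | E34

lemma UNIV_edge: "(UNIV :: edge set) = {E12, E13, E14, E23, E24, E34}"
  using edge.exhaust by auto

instance edge :: finite
  by standard (simp add: UNIV_edge)

text \<open>The edge disjoint from a given edge; {e, opp_edge e} runs over the three
  perfect matchings of K4.\<close>
fun opp_edge :: "edge \<Rightarrow> edge" where
  "opp_edge E12 = E34" | "opp_edge E34 = E12"
| "opp_edge E13 = E24" | "opp_edge E24 = E13"
| "opp_edge E14 = E23" | "opp_edge E23 = E14"

definition refl_mat :: "real ^ 'n \<Rightarrow> real ^ 'n ^ 'n" where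
  "refl_mat v = mat 1 - (2 / (v \<bullet> v)) *\<^sub>R (\<chi> i j. v $ i * v $ j)"

inductive_set gen_group :: "(real ^ 'n ^ 'n) set \<Rightarrow> (real ^ 'n ^ 'n) set"
  for S :: "(real ^ 'n ^ 'n) set" where
  gen: "A \<in> S \<Longrightarrow> A \<in> gen_group S"
| one: "mat 1 \<in> gen_group S"
| mult: "A \<in> gen_group S \<Longrightarrow> B \<in> gen_group S \<Longrightarrow> A ** B \<in> gen_group S"
| inv: "A \<in> gen_group S \<Longrightarrow> matrix_inv A \<in> gen_group S"

text \<open>The 30 vectors (up to sign): coordinate vectors e_ij, and
  e_a \<plusminus> e_b \<plusminus> e_c \<plusminus> e_f for {a,b,c,f} the complement of a perfect matching
  {e, opp_edge e}. (Both signs of each vector are included; this does not change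
  the set of reflections.)\<close>
definition W_vectors :: "(real ^ edge) set" where
  "W_vectors = {axis e 1 | e. True} \<union>
     {(\<chi> d. if d = e \<or> d = opp_edge e then 0 else s d) | e s.
        \<forall>d. s d \<in> {1, -1}}"

definition W_group :: "(real ^ edge ^ edge) set" where
  "W_group = gen_group (refl_mat ` W_vectors)"

definition D6_roots :: "(real ^ 6) set" where
  "D6_roots = {axis i 1 + s *\<^sub>R axis j 1 | i j s. i \<noteq> j \<and> s \<in> {1, -1}}"

definition weyl_D6 :: "(real ^ 6 ^ 6) set" where
  "weyl_D6 = gen_group (refl_mat ` D6_roots)"

text \<open>The variety L_{2,4} in C^6 (Cayley--Menger determinant).\<close>
definition CM_matrix :: "complex ^ edge \<Rightarrow> complex ^ 3 ^ 3" where
  "CM_matrix l = (let q = (\<lambda>e. (l $ e)\<^sup>2) in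
     vector [vector [2 * q E14, q E14 + q E24 - q E12, q E14 + q E34 - q E13],
             vector [q E14 + q E24 - q E12, 2 * q E24, q E24 + q E34 - q E23],
             vector [q E14 + q E34 - q E13, q E24 + q E34 - q E23, 2 * q E34]])"

definition L24 :: "(complex ^ edge) set" where
  "L24 = {l. det (CM_matrix l) = 0}"

definition cact :: "real ^ edge ^ edge \<Rightarrow> complex ^ edge \<Rightarrow> complex ^ edge" where
  "cact A l = (\<chi> i. \<Sum>j\<in>UNIV. complex_of_real (A $ i $ j) * l $ j)"

end

theory Submission
  imports Defs
begin

(* Let T : R^edge -> R^6 send l to (l12 + l34, l12 - l34, l13 + l24, l13 - l24, l14 + l23, l14 - l23).
   Then T^t T = 2 I and T T^t = 2 I, so A |-> T A T^t / 2 is an injective group homomorphism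
   taking the reflection in v to the reflection in T v. T maps each coordinate vector e_ij to a
   root e_i +- e_j of D6 and each vector e_a +- e_b +- e_c +- e_f to twice such a root, while T^t
   maps every root of D6 to a multiple of one of the 30 vectors. Hence W is conjugate to the Weyl
   group of D6, the group of signed permutation matrices with an even number of sign changes,
   which has order 6! * 2^5 = 23040.

   For L_{2,4} it suffices that every generating reflection preserves the Cayley-Menger
   determinant, a polynomial in the squared lengths. A reflection in e_ij only negates l_ij. The
   reflection in a vector with signs s_d, vanishing on a perfect matching, fixes the two lengths
   of the matching and replaces the signed lengths a_d = s_d l_d of the other four edges by
   a_d - S / 2, where S is the sum of these four a_d; the determinant is invariant under this
   substitution. *)

section \<open>Reflections and the groups they generate\<close>

lemma matrix_inv_unique:
  fixes A :: "'a::comm_ring_1^'n^'n"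
  assumes "A ** B = mat 1" "B ** A = mat 1"
  shows "matrix_inv A = B"
proof -
  let ?C = "matrix_inv A"
  have "A ** ?C = mat 1 \<and> ?C ** A = mat 1"
    unfolding matrix_inv_def using assms
    by (intro someI_ex[of "\<lambda>C. A ** C = mat 1 \<and> C ** A = mat 1"]) blast
  have "?C = ?C ** (A ** B)" using assms by simp
  also have "\<dots> = (?C ** A) ** B" by (simp add: matrix_mul_assoc)
  also have "\<dots> = B" using \<open>A ** ?C = mat 1 \<and> ?C ** A = mat 1\<close> by simp
  finally show ?thesis .
qed

lemma matrix_inv_orthogonal: "orthogonal_matrix (A::real^'n^'n) \<Longrightarrow> matrix_inv A = transpose A"
  unfolding orthogonal_matrix_def by (intro matrix_inv_unique) (auto simp del: vec_eq_iff)

lemma matrix_diff_rdistrib: "((A::'a::comm_ring_1^'n^'m) - B) ** C = A ** C - B ** C"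
  by (simp add: matrix_matrix_mult_def vec_eq_iff sum_subtractf left_diff_distrib)

lemma matrix_diff_ldistrib: "(A::'a::comm_ring_1^'n^'m) ** (B - C) = A ** B - A ** C"
  by (simp add: matrix_matrix_mult_def vec_eq_iff sum_subtractf right_diff_distrib)

lemma scaleR_mat_1_mult_vec: "(c *\<^sub>R mat 1) *v v = c *\<^sub>R (v::real^'n)"
  by (simp add: vec_eq_iff matrix_vector_mult_def mat_def if_distrib if_distribR cong: if_cong)

lemma transpose_refl_mat: "transpose (refl_mat v) = refl_mat v"
  unfolding refl_mat_def by (simp add: transpose_def vec_eq_iff mat_def mult.commute)

lemma refl_mat_involutive:
  fixes v :: "real^'n"
  assumes "v \<noteq> 0"
  shows "refl_mat v ** refl_mat v = mat 1"
proof -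
  let ?P = "(\<chi> i j. v $ i * v $ j) :: real^'n^'n"
  let ?c = "2 / (v \<bullet> v)"
  have "?P ** ?P = (v \<bullet> v) *\<^sub>R ?P"
    unfolding matrix_matrix_mult_def inner_vec_def
    by (simp add: vec_eq_iff sum_distrib_left sum_distrib_right algebra_simps)
  then have "refl_mat v ** refl_mat v = mat 1 - (?c + ?c - ?c * ?c * (v \<bullet> v)) *\<^sub>R ?P"
    unfolding refl_mat_def matrix_diff_rdistrib matrix_diff_ldistrib
    by (simp add: matrix_scalar_ac vec_eq_iff algebra_simps flip: scalar_matrix_assoc)
  also have "?c + ?c - ?c * ?c * (v \<bullet> v) = 0"
    using assms by (simp add: field_simps)
  finally show ?thesis by simp
qed

lemma orthogonal_matrix_refl_mat: "(v::real^'n) \<noteq> 0 \<Longrightarrow> orthogonal_matrix (refl_mat v)"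
  unfolding orthogonal_matrix_def transpose_refl_mat using refl_mat_involutive by auto

lemma refl_mat_scaleR: "c \<noteq> 0 \<Longrightarrow> refl_mat (c *\<^sub>R v) = refl_mat v"
  unfolding refl_mat_def by (simp add: vec_eq_iff algebra_simps power2_eq_square)

lemma gen_group_subset:
  assumes orth: "\<And>B. B \<in> S \<Longrightarrow> orthogonal_matrix B"
    and gens: "S \<subseteq> M" and one: "mat 1 \<in> M"
    and mult_closed: "\<And>A B. A \<in> M \<Longrightarrow> B \<in> M \<Longrightarrow> A ** B \<in> M"
    and transpose_closed: "\<And>A. A \<in> M \<Longrightarrow> orthogonal_matrix A \<Longrightarrow> transpose A \<in> M"
  shows "gen_group S \<subseteq> M"
proof -
  have "A \<in> M \<and> orthogonal_matrix A" if "A \<in> gen_group S" for A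
    using that
  proof induction
    case (gen A)
    then show ?case using orth gens by blast
  next
    case one
    then show ?case using \<open>mat 1 \<in> M\<close> orthogonal_matrix_id by blast
  next
    case (mult A B)
    then show ?case using mult_closed orthogonal_matrix_mul by blast
  next
    case (inv A)
    then show ?case using transpose_closed by (simp add: matrix_inv_orthogonal)
  qed
  then show ?thesis by blast
qed

lemma orthogonal_matrix_gen_group:
  "(\<And>B. B \<in> S \<Longrightarrow> orthogonal_matrix B) \<Longrightarrow> A \<in> gen_group S \<Longrightarrow> orthogonal_matrix A"
  using gen_group_subset[of S "Collect orthogonal_matrix"]
  by (auto simp: orthogonal_matrix_id orthogonal_matrix_mul)

lemma transpose_in_gen_group:
  assumes "\<And>B. B \<in> S \<Longrightarrow> orthogonal_matrix B" "A \<in> gen_group S"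
  shows "transpose A \<in> gen_group S"
  using gen_group.inv[OF assms(2)] matrix_inv_orthogonal[OF orthogonal_matrix_gen_group[OF assms]]
  by simp

section \<open>Conjugation by a scaled orthogonal matrix\<close>

locale scaled_orthogonal =
  fixes T :: "real^'m^'n" and k :: real
  assumes nonzero: "k \<noteq> 0"
    and transpose_mult_self: "transpose T ** T = k *\<^sub>R mat 1"
    and mult_transpose_self: "T ** transpose T = k *\<^sub>R mat 1"
begin

definition conj :: "real^'m^'m \<Rightarrow> real^'n^'n" where
  "conj A = (1/k) *\<^sub>R (T ** A ** transpose T)"

lemma conj_mult: "conj (A ** B) = conj A ** conj B"
proof -
  have "conj A ** conj B = ((1/k) * (1/k)) *\<^sub>R (T ** A ** (transpose T ** T) ** B ** transpose T)"
    unfolding conj_def by (simp add: matrix_scalar_ac matrix_mul_assoc flip: scalar_matrix_assoc)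
  also have "\<dots> = conj (A ** B)"
    unfolding transpose_mult_self conj_def using nonzero
    by (simp add: matrix_scalar_ac matrix_mul_assoc flip: scalar_matrix_assoc)
  finally show ?thesis by simp
qed

lemma conj_mat_1: "conj (mat 1) = mat 1"
  unfolding conj_def using nonzero by (simp add: mult_transpose_self)

lemma conj_transpose: "conj (transpose A) = transpose (conj A)"
  unfolding conj_def by (simp add: transpose_scalar matrix_transpose_mul matrix_mul_assoc)

lemma orthogonal_matrix_conj: "orthogonal_matrix A \<Longrightarrow> orthogonal_matrix (conj A)"
  unfolding orthogonal_matrix_def by (metis conj_mult conj_mat_1 conj_transpose)

lemma inj_conj: "inj conj"
proof (rule injI)
  have recover: "transpose T ** conj A ** T = k *\<^sub>R A" for A
  proof -
    have "transpose T ** conj A ** T = (1/k) *\<^sub>R ((transpose T ** T) ** A ** (transpose T ** T))"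
      unfolding conj_def by (simp add: matrix_scalar_ac matrix_mul_assoc flip: scalar_matrix_assoc)
    also have "\<dots> = k *\<^sub>R A"
      unfolding transpose_mult_self using nonzero by (simp add: matrix_scalar_ac flip: scalar_matrix_assoc)
    finally show ?thesis .
  qed
  fix A B assume "conj A = conj B"
  then have "k *\<^sub>R A = k *\<^sub>R B" by (metis recover)
  then show "A = B" using nonzero by simp
qed

lemma inner_mult_vec_self: "(T *v v) \<bullet> (T *v v) = k * (v \<bullet> v)"
proof -
  have "(T *v v) \<bullet> (T *v v) = v \<bullet> (transpose T *v (T *v v))"
    by (metis dot_lmul_matrix vector_transpose_matrix)
  also have "transpose T *v (T *v v) = k *\<^sub>R v"
    by (simp add: matrix_vector_mul_assoc transpose_mult_self scaleR_mat_1_mult_vec)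
  finally show ?thesis by simp
qed

lemma conj_refl_mat: "conj (refl_mat v) = refl_mat (T *v v)"
proof -
  have outer: "T ** (\<chi> i j. v $ i * v $ j) ** transpose T = (\<chi> i j. (T *v v) $ i * (T *v v) $ j)"
    unfolding matrix_matrix_mult_def matrix_vector_mult_def transpose_def
    by (simp add: vec_eq_iff sum_distrib_left sum_distrib_right algebra_simps)
  have "conj (refl_mat v) = (1/k) *\<^sub>R (T ** transpose T)
     - ((1/k) * (2 / (v \<bullet> v))) *\<^sub>R (T ** (\<chi> i j. v $ i * v $ j) ** transpose T)"
    unfolding conj_def refl_mat_def matrix_diff_rdistrib matrix_diff_ldistrib
    by (simp add: matrix_scalar_ac matrix_mul_assoc algebra_simps flip: scalar_matrix_assoc)
  also have "\<dots> = refl_mat (T *v v)"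
    unfolding refl_mat_def outer inner_mult_vec_self mult_transpose_self using nonzero by simp
  finally show ?thesis .
qed

lemma conj_gen_group:
  assumes orth: "\<And>A. A \<in> S \<Longrightarrow> orthogonal_matrix A"
  shows "conj ` gen_group S = gen_group (conj ` S)"
proof
  have orth_conj: "\<And>B. B \<in> conj ` S \<Longrightarrow> orthogonal_matrix B"
    using orth orthogonal_matrix_conj by blast
  have "gen_group S \<subseteq> {A. conj A \<in> gen_group (conj ` S)}"
  proof (rule gen_group_subset[OF orth])
    show "S \<subseteq> {A. conj A \<in> gen_group (conj ` S)}"
      by (auto intro: gen_group.gen)
    show "mat 1 \<in> {A. conj A \<in> gen_group (conj ` S)}"
      by (simp add: conj_mat_1 gen_group.one)
    show "A ** B \<in> {A. conj A \<in> gen_group (conj ` S)}"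
      if "A \<in> {A. conj A \<in> gen_group (conj ` S)}" "B \<in> {A. conj A \<in> gen_group (conj ` S)}" for A B
      using that by (simp add: conj_mult gen_group.mult)
    show "transpose A \<in> {A. conj A \<in> gen_group (conj ` S)}"
      if "A \<in> {A. conj A \<in> gen_group (conj ` S)}" for A
      using that transpose_in_gen_group[OF orth_conj] by (simp add: conj_transpose)
  qed
  then show "conj ` gen_group S \<subseteq> gen_group (conj ` S)" by blast
  show "gen_group (conj ` S) \<subseteq> conj ` gen_group S"
  proof (rule gen_group_subset[OF orth_conj])
    show "conj ` S \<subseteq> conj ` gen_group S"
      by (intro image_mono subsetI gen_group.gen)
    show "mat 1 \<in> conj ` gen_group S"
      by (metis conj_mat_1 gen_group.one imageI)
    show "A ** B \<in> conj ` gen_group S" if AB: "A \<in> conj ` gen_group S" "B \<in> conj ` gen_group S" for A B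
    proof -
      obtain A' B' where "A' \<in> gen_group S" "B' \<in> gen_group S" "A = conj A'" "B = conj B'"
        using AB by blast
      then show ?thesis by (simp add: image_iff flip: conj_mult) (blast intro: gen_group.mult)
    qed
    show "transpose A \<in> conj ` gen_group S" if A: "A \<in> conj ` gen_group S" for A
    proof -
      obtain A' where "A' \<in> gen_group S" "A = conj A'"
        using A by blast
      then show ?thesis
        by (simp add: image_iff flip: conj_transpose) (blast intro: transpose_in_gen_group[OF orth])
    qed
  qed
qed

end

section \<open>The Weyl group of type D\<close>

definition signed_perm_mat :: "('n \<Rightarrow> 'n) \<Rightarrow> ('n \<Rightarrow> real) \<Rightarrow> real^'n^'n" where
  "signed_perm_mat p s = (\<chi> i j. if i = p j then s i else 0)"

lemma signed_perm_mat_mult: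
  assumes "bij p"
  shows "signed_perm_mat p s ** signed_perm_mat q t = signed_perm_mat (p \<circ> q) (\<lambda>i. s i * t (inv p i))"
proof -
  have "(signed_perm_mat p s ** signed_perm_mat q t) $ i $ k
      = (\<Sum>j\<in>UNIV. if j = q k then (if i = p j then s i else 0) * t j else 0)" for i k
    unfolding signed_perm_mat_def matrix_matrix_mult_def vec_lambda_beta by (rule sum.cong) auto
  also have "\<dots> i k = (if i = p (q k) then s i else 0) * t (q k)" for i k
    by (simp add: sum.delta)
  finally show ?thesis
    using assms by (auto simp: vec_eq_iff signed_perm_mat_def bij_is_inj inv_f_f)
qed

lemma signed_perm_mat_id: "signed_perm_mat id (\<lambda>_. 1) = mat 1"
  unfolding signed_perm_mat_def mat_def by (simp add: vec_eq_iff)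

lemma transpose_signed_perm_mat:
  "bij p \<Longrightarrow> transpose (signed_perm_mat p s) = signed_perm_mat (inv p) (s \<circ> p)"
  unfolding signed_perm_mat_def transpose_def
  by (auto simp: vec_eq_iff bij_inv_eq_iff)

definition even_signs :: "('n \<Rightarrow> real) set" where
  "even_signs = {s. (\<forall>i. s i = 1 \<or> s i = -1) \<and> prod s UNIV = 1}"

definition even_signed_perm_mats :: "(real^'n^'n) set" where
  "even_signed_perm_mats = {signed_perm_mat p s | p s. p permutes UNIV \<and> s \<in> even_signs}"

definition Dn_roots :: "(real^'n) set" where
  "Dn_roots = {axis i 1 + s *\<^sub>R axis j 1 | i j s. i \<noteq> j \<and> s \<in> {1, -1}}"

lemma pair_sign_change_even:
  assumes "i \<noteq> j" "c = 1 \<or> c = -1"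
  shows "(\<lambda>k. if k = i \<or> k = j then c else 1) \<in> (even_signs :: ('n::finite \<Rightarrow> real) set)"
proof -
  have "(\<Prod>k\<in>UNIV. if k = i \<or> k = j then c else 1) = (\<Prod>k\<in>{i, j}. c)"
    by (rule prod.mono_neutral_cong_right) auto
  then show ?thesis
    using assms unfolding even_signs_def by auto
qed

lemma even_signs_mult:
  assumes "s \<in> even_signs" "t \<in> even_signs" "p permutes UNIV"
  shows "(\<lambda>i. s i * t (inv p i)) \<in> even_signs"
proof -
  have "prod (\<lambda>i. s i * t (inv p i)) UNIV = prod s UNIV * prod (t \<circ> inv p) UNIV"
    by (simp add: prod.distrib comp_def)
  also have "prod (t \<circ> inv p) UNIV = prod t UNIV"
    using prod.permute[OF permutes_inv[OF assms(3)], of t] by simp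
  moreover have "s i * t (inv p i) = 1 \<or> s i * t (inv p i) = -1" for i
  proof -
    have "s i = 1 \<or> s i = -1" "t (inv p i) = 1 \<or> t (inv p i) = -1"
      using assms(1,2) unfolding even_signs_def by auto
    then show ?thesis by auto
  qed
  ultimately show ?thesis
    using assms(1,2) unfolding even_signs_def by simp
qed

lemma even_signs_comp: "s \<in> even_signs \<Longrightarrow> p permutes UNIV \<Longrightarrow> s \<circ> p \<in> even_signs"
  unfolding even_signs_def using prod.permute[of p UNIV s] by auto

lemma refl_mat_Dn_root:
  assumes "i \<noteq> j" "\<sigma> = 1 \<or> \<sigma> = -1"
  shows "refl_mat (axis i 1 + \<sigma> *\<^sub>R axis j 1 :: real^'n) =
         signed_perm_mat (Transposition.transpose i j) (\<lambda>k. if k = i \<or> k = j then -\<sigma> else 1)"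
proof -
  have "(axis i 1 + \<sigma> *\<^sub>R axis j 1 :: real^'n) \<bullet> (axis i 1 + \<sigma> *\<^sub>R axis j 1) = 2"
    using assms by (auto simp: inner_add_left inner_add_right inner_axis_axis)
  then show ?thesis
    unfolding refl_mat_def using assms
    by (auto simp: vec_eq_iff signed_perm_mat_def axis_def mat_def Transposition.transpose_def)
qed

lemma Dn_roots_nonzero: "r \<in> Dn_roots \<Longrightarrow> r \<noteq> 0"
  unfolding Dn_roots_def by (auto simp: vec_eq_iff axis_def)

lemma orthogonal_matrix_refl_mat_Dn_roots:
  "A \<in> refl_mat ` Dn_roots \<Longrightarrow> orthogonal_matrix A"
  using orthogonal_matrix_refl_mat Dn_roots_nonzero by blast

lemma signed_perm_mat_in_even_signed_perm_mats:
  "p permutes UNIV \<Longrightarrow> s \<in> even_signs \<Longrightarrow> signed_perm_mat p s \<in> even_signed_perm_mats"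
  unfolding even_signed_perm_mats_def by blast

lemma gen_group_Dn_roots_subset:
  "gen_group (refl_mat ` Dn_roots) \<subseteq> (even_signed_perm_mats :: (real^'n^'n) set)"
proof (rule gen_group_subset[OF orthogonal_matrix_refl_mat_Dn_roots])
  show "refl_mat ` Dn_roots \<subseteq> (even_signed_perm_mats :: (real^'n^'n) set)"
  proof
    fix A :: "real^'n^'n" assume "A \<in> refl_mat ` Dn_roots"
    then obtain i j \<sigma> where ij: "i \<noteq> j" and \<sigma>: "\<sigma> = 1 \<or> \<sigma> = -1"
      and "A = refl_mat (axis i 1 + \<sigma> *\<^sub>R axis j 1)"
      unfolding Dn_roots_def by blast
    then have "A = signed_perm_mat (Transposition.transpose i j) (\<lambda>k. if k = i \<or> k = j then -\<sigma> else 1)"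
      by (simp add: refl_mat_Dn_root)
    moreover have "(\<lambda>k. if k = i \<or> k = j then -\<sigma> else 1) \<in> even_signs"
      using ij \<sigma> by (intro pair_sign_change_even) auto
    ultimately show "A \<in> even_signed_perm_mats"
      by (simp add: signed_perm_mat_in_even_signed_perm_mats permutes_swap_id)
  qed
  have "(\<lambda>_. 1) \<in> (even_signs :: ('n \<Rightarrow> real) set)"
    by (simp add: even_signs_def)
  then show "mat 1 \<in> (even_signed_perm_mats :: (real^'n^'n) set)"
    by (metis signed_perm_mat_id signed_perm_mat_in_even_signed_perm_mats permutes_id)
  show "A ** B \<in> even_signed_perm_mats" if AB: "A \<in> even_signed_perm_mats" "B \<in> even_signed_perm_mats"
    for A B :: "real^'n^'n"
  proof -
    obtain p s q t where "p permutes UNIV" "s \<in> even_signs" "q permutes UNIV" "t \<in> even_signs"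
      and "A = signed_perm_mat p s" "B = signed_perm_mat q t"
      using AB unfolding even_signed_perm_mats_def by blast
    then show ?thesis
      by (simp add: signed_perm_mat_mult permutes_bij signed_perm_mat_in_even_signed_perm_mats
          permutes_compose even_signs_mult)
  qed
  show "transpose A \<in> even_signed_perm_mats" if A: "A \<in> even_signed_perm_mats" for A :: "real^'n^'n"
  proof -
    obtain p s where "p permutes UNIV" "s \<in> even_signs" "A = signed_perm_mat p s"
      using A unfolding even_signed_perm_mats_def by blast
    then show ?thesis
      by (simp add: transpose_signed_perm_mat permutes_bij signed_perm_mat_in_even_signed_perm_mats
          permutes_inv even_signs_comp)
  qed
qed

lemma refl_mat_Dn_root_in_gen_group:
  "i \<noteq> j \<Longrightarrow> \<sigma> = 1 \<or> \<sigma> = -1 \<Longrightarrow>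
    refl_mat (axis i 1 + \<sigma> *\<^sub>R axis j 1 :: real^'n) \<in> gen_group (refl_mat ` Dn_roots)"
  unfolding Dn_roots_def by (rule gen_group.gen) blast

lemma swap_mat_in_gen_group:
  assumes "i \<noteq> j"
  shows "signed_perm_mat (Transposition.transpose i j) (\<lambda>_. 1)
           \<in> (gen_group (refl_mat ` Dn_roots) :: (real^'n^'n) set)"
proof -
  have "(\<lambda>k::'n. if k = i \<or> k = j then - (-1) else (1::real)) = (\<lambda>_. 1)" by auto
  then show ?thesis
    using refl_mat_Dn_root_in_gen_group[OF assms, of "-1"] refl_mat_Dn_root[OF assms, of "-1"] by auto
qed

lemma perm_mat_in_gen_group:
  assumes "p permutes (UNIV :: 'n set)"
  shows "signed_perm_mat p (\<lambda>_. 1) \<in> (gen_group (refl_mat ` Dn_roots) :: (real^'n^'n) set)"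
  using assms finite_class.finite_UNIV
proof (induction p rule: permutes_induct)
  case id
  show ?case unfolding signed_perm_mat_id by (rule gen_group.one)
next
  case (swap a b p)
  have "signed_perm_mat (Transposition.transpose a b \<circ> p) (\<lambda>_. 1)
      = signed_perm_mat (Transposition.transpose a b) (\<lambda>_. 1) ** signed_perm_mat p (\<lambda>_. 1)"
    by (simp add: signed_perm_mat_mult)
  then show ?case
    using gen_group.mult[OF swap_mat_in_gen_group[OF swap(3)] swap.IH] by metis
qed

lemma pair_sign_change_mat_in_gen_group:
  assumes "i \<noteq> j"
  shows "signed_perm_mat id (\<lambda>k. if k = i \<or> k = j then -1 else 1)
           \<in> (gen_group (refl_mat ` Dn_roots) :: (real^'n^'n) set)"
proof -
  let ?\<tau> = "Transposition.transpose i j"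
  let ?d = "\<lambda>k::'n. if k = i \<or> k = j then -1 else (1::real)"
  have "signed_perm_mat ?\<tau> (\<lambda>_. 1) ** signed_perm_mat ?\<tau> ?d
      = signed_perm_mat (?\<tau> \<circ> ?\<tau>) (\<lambda>k. ?d (?\<tau> k))"
    by (simp add: signed_perm_mat_mult)
  also have "\<dots> = signed_perm_mat id ?d"
    by (rule arg_cong2[where f=signed_perm_mat]) (auto simp: Transposition.transpose_def)
  finally have eq: "signed_perm_mat ?\<tau> (\<lambda>_. 1) ** signed_perm_mat ?\<tau> ?d = signed_perm_mat id ?d" .
  have "signed_perm_mat ?\<tau> ?d \<in> gen_group (refl_mat ` Dn_roots)"
    using refl_mat_Dn_root_in_gen_group[OF assms, of 1] refl_mat_Dn_root[OF assms, of 1] by simp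
  from gen_group.mult[OF swap_mat_in_gen_group[OF assms] this] show ?thesis
    unfolding eq .
qed

lemma even_sign_mat_in_gen_group:
  assumes "s \<in> even_signs"
  shows "signed_perm_mat id s \<in> (gen_group (refl_mat ` Dn_roots) :: (real^'n^'n) set)"
  using assms
proof (induction "card {i. s i = -1}" arbitrary: s rule: less_induct)
  case less
  show ?case
  proof (cases "\<exists>a. s a = -1")
    case False
    then have "s = (\<lambda>_. 1)" using less.prems by (auto simp: even_signs_def)
    then show ?thesis by (simp add: signed_perm_mat_id gen_group.one)
  next
    case True
    then obtain a where a: "s a = -1" by blast
    have "\<exists>b. b \<noteq> a \<and> s b = -1"
    proof (rule ccontr)
      assume "\<not> ?thesis"
      then have "\<forall>b\<in>UNIV - {a}. s b = 1" using less.prems by (fastforce simp: even_signs_def)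
      then have "prod s (UNIV - {a}) = 1" by simp
      then have "prod s UNIV = -1" using a by (simp add: prod.remove[of UNIV a])
      then show False using less.prems by (simp add: even_signs_def)
    qed
    then obtain b where b: "b \<noteq> a" "s b = -1" by blast
    define d where "d = (\<lambda>k. if k = a \<or> k = b then -1 else (1::real))"
    define s' where "s' = (\<lambda>k. s k * d k)"
    have "d \<in> even_signs" unfolding d_def using b(1) by (intro pair_sign_change_even) auto
    then have "s' \<in> even_signs"
      using even_signs_mult[OF less.prems _ permutes_id] by (simp add: s'_def)
    moreover have "{i. s' i = -1} \<subset> {i. s i = -1}"
      using a b unfolding s'_def d_def by auto
    then have "card {i. s' i = -1} < card {i. s i = -1}"
      by (simp add: psubset_card_mono)
    ultimately have "signed_perm_mat id s' \<in> gen_group (refl_mat ` Dn_roots)"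
      using less.hyps by blast
    moreover have "signed_perm_mat id s' ** signed_perm_mat id d = signed_perm_mat id s"
      using a b
      by (auto simp: signed_perm_mat_mult s'_def d_def intro!: arg_cong[where f="signed_perm_mat id"])
    ultimately show ?thesis
      using gen_group.mult pair_sign_change_mat_in_gen_group[OF b(1)[symmetric]]
      unfolding d_def by metis
  qed
qed

lemma gen_group_Dn_roots:
  "gen_group (refl_mat ` Dn_roots) = (even_signed_perm_mats :: (real^'n^'n) set)"
proof
  show "even_signed_perm_mats \<subseteq> (gen_group (refl_mat ` Dn_roots) :: (real^'n^'n) set)"
  proof
    fix A :: "real^'n^'n" assume "A \<in> even_signed_perm_mats"
    then obtain p s where "p permutes UNIV" "s \<in> even_signs" "A = signed_perm_mat p s"
      unfolding even_signed_perm_mats_def by blast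
    moreover have "signed_perm_mat id s ** signed_perm_mat p (\<lambda>_. 1) = signed_perm_mat p s"
      by (simp add: signed_perm_mat_mult)
    ultimately show "A \<in> gen_group (refl_mat ` Dn_roots)"
      using gen_group.mult even_sign_mat_in_gen_group perm_mat_in_gen_group by metis
  qed
qed (rule gen_group_Dn_roots_subset)

lemma inj_on_signed_perm_mat:
  "inj_on (\<lambda>(p, s). signed_perm_mat p s) ({p. p permutes (UNIV :: 'n::finite set)} \<times> even_signs)"
proof (rule inj_onI, clarsimp)
  fix p p' :: "'n \<Rightarrow> 'n" and s s' :: "'n \<Rightarrow> real"
  assume p: "p permutes UNIV" "p' permutes UNIV" and s: "s \<in> even_signs" "s' \<in> even_signs"
    and eq: "signed_perm_mat p s = signed_perm_mat p' s'"
  have nonzero: "s i \<noteq> 0 \<and> s' i \<noteq> 0" for i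
  proof -
    have "s i = 1 \<or> s i = -1" "s' i = 1 \<or> s' i = -1"
      using s by (simp_all add: even_signs_def)
    then show ?thesis by auto
  qed
  have entry: "signed_perm_mat p s $ i $ j = (if i = p j then s i else 0)" for p s i j
    by (simp add: signed_perm_mat_def)
  have "p j = p' j" for j
    using eq entry[of p s "p j" j] entry[of p' s' "p j" j] nonzero by metis
  then have "p = p'" by blast
  moreover have "s i = s' i" for i
    using eq entry[of p s i "inv p i"] entry[of p' s' i "inv p i"] \<open>p = p'\<close>
      permutes_inverses(1)[OF p(1)] by metis
  ultimately show "p = p' \<and> s = s'" by blast
qed

lemma prod_sign_values:
  "(\<And>i. i \<in> A \<Longrightarrow> t i = 1 \<or> t i = -1) \<Longrightarrow> prod t A = 1 \<or> prod t A = (-1::real)"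
proof (induction A rule: infinite_finite_induct)
  case (insert x F)
  then have "t x = 1 \<or> t x = -1" "prod t F = 1 \<or> prod t F = -1"
    by auto
  then show ?case
    using insert.hyps by auto
qed auto

lemma card_even_signs: "card (even_signs :: ('n::finite \<Rightarrow> real) set) = 2 ^ (CARD('n) - 1)"
proof -
  obtain a :: 'n where True by blast
  let ?R = "UNIV - {a}"
  let ?signs = "PiE ?R (\<lambda>_. {1, -1::real})"
  have prod_R: "prod s ?R = s a" if "s \<in> even_signs" for s
  proof -
    have "s a * prod s ?R = 1" "s a = 1 \<or> s a = -1"
      using that by (simp_all add: even_signs_def prod.remove[of UNIV a])
    then show ?thesis by (elim disjE) auto
  qed
  have "bij_betw (\<lambda>s. restrict s ?R) even_signs ?signs"
  proof (rule bij_betw_byWitness[where f' = "\<lambda>t i. if i = a then prod t ?R else t i"])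
    show "\<forall>s\<in>even_signs. (\<lambda>i. if i = a then prod (restrict s ?R) ?R else restrict s ?R i) = s"
      using prod_R by (auto simp: fun_eq_iff)
    show "\<forall>t\<in>?signs. restrict (\<lambda>i. if i = a then prod t ?R else t i) ?R = t"
      by (auto simp: fun_eq_iff PiE_def extensional_def)
    show "(\<lambda>s. restrict s ?R) ` even_signs \<subseteq> ?signs"
    proof (rule image_subsetI)
      fix s :: "'n \<Rightarrow> real" assume "s \<in> even_signs"
      then show "restrict s ?R \<in> ?signs"
        unfolding restrict_PiE_iff even_signs_def by blast
    qed
    show "(\<lambda>t i. if i = a then prod t ?R else t i) ` ?signs \<subseteq> even_signs"
    proof clarify
      fix t assume t: "t \<in> ?signs"
      then have "prod t ?R = 1 \<or> prod t ?R = -1"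
        by (intro prod_sign_values) auto
      then have "prod (\<lambda>i. if i = a then prod t ?R else t i) UNIV = 1"
        by (elim disjE) (simp_all add: prod.remove[of UNIV a])
      moreover have "(if i = a then prod t ?R else t i) = 1 \<or> (if i = a then prod t ?R else t i) = -1" for i
        using t \<open>prod t ?R = 1 \<or> prod t ?R = -1\<close> by (auto simp: PiE_iff)
      ultimately show "(\<lambda>i. if i = a then prod t ?R else t i) \<in> even_signs"
        by (simp add: even_signs_def)
    qed
  qed
  then have "card (even_signs :: ('n \<Rightarrow> real) set) = card ?signs" by (rule bij_betw_same_card)
  also have "\<dots> = 2 ^ (CARD('n) - 1)"
    by (simp add: card_PiE card_Diff_singleton numeral_2_eq_2)
  finally show ?thesis .
qed

lemma card_even_signed_perm_mats:
  "card (even_signed_perm_mats :: (real^'n^'n) set) = fact CARD('n) * 2 ^ (CARD('n) - 1)"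
proof -
  have "(even_signed_perm_mats :: (real^'n^'n) set)
      = (\<lambda>(p, s). signed_perm_mat p s) ` ({p. p permutes UNIV} \<times> even_signs)"
    unfolding even_signed_perm_mats_def by auto
  also have "card \<dots> = card ({p. p permutes (UNIV :: 'n set)} \<times> (even_signs :: ('n \<Rightarrow> real) set))"
    by (rule card_image[OF inj_on_signed_perm_mat])
  also have "\<dots> = fact CARD('n) * 2 ^ (CARD('n) - 1)"
    by (simp add: card_cartesian_product card_even_signs card_permutations)
  finally show ?thesis .
qed

section \<open>The group W\<close>

lemma forall_edge: "(\<forall>e::edge. P e) \<longleftrightarrow> P E12 \<and> P E13 \<and> P E14 \<and> P E23 \<and> P E24 \<and> P E34"
  by (metis edge.exhaust)

lemma ex_edge: "(\<exists>e::edge. P e) \<longleftrightarrow> P E12 \<or> P E13 \<or> P E14 \<or> P E23 \<or> P E24 \<or> P E34"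
  by (metis edge.exhaust)

lemma sum_edge: "sum f (UNIV::edge set) = f E12 + f E13 + f E14 + f E23 + f E24 + f E34"
  unfolding UNIV_edge by (simp add: add.assoc)

lemma exhaust_6:
  fixes x :: 6
  shows "x = 1 \<or> x = 2 \<or> x = 3 \<or> x = 4 \<or> x = 5 \<or> x = 6"
proof (induct x)
  case (of_int z)
  then have "z = 0 \<or> z = 1 \<or> z = 2 \<or> z = 3 \<or> z = 4 \<or> z = 5" by fastforce
  then show ?case by auto
qed

lemma forall_6: "(\<forall>i::6. P i) \<longleftrightarrow> P 1 \<and> P 2 \<and> P 3 \<and> P 4 \<and> P 5 \<and> P 6"
  by (metis exhaust_6)

lemma ex_6: "(\<exists>i::6. P i) \<longleftrightarrow> P 1 \<or> P 2 \<or> P 3 \<or> P 4 \<or> P 5 \<or> P 6"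
  by (metis exhaust_6)

lemma UNIV_6: "UNIV = {1, 2, 3, 4, 5, 6::6}"
  using exhaust_6 by auto

lemma sum_6: "sum f (UNIV::6 set) = f 1 + f 2 + f 3 + f 4 + f 5 + f 6"
  unfolding UNIV_6 by (simp add: add.assoc)

lemma mem_W_vectors:
  "w \<in> W_vectors \<longleftrightarrow> (\<exists>e. w = axis e 1) \<or>
     (\<exists>e. w $ e = 0 \<and> w $ opp_edge e = 0 \<and>
        (\<forall>d. d \<noteq> e \<and> d \<noteq> opp_edge e \<longrightarrow> w $ d = 1 \<or> w $ d = -1))"
proof -
  have "(\<exists>s. (\<forall>d. s d \<in> {1, -1::real}) \<and> w = (\<chi> d. if d = e \<or> d = opp_edge e then 0 else s d))
    \<longleftrightarrow> w $ e = 0 \<and> w $ opp_edge e = 0 \<and> (\<forall>d. d \<noteq> e \<and> d \<noteq> opp_edge e \<longrightarrow> w $ d = 1 \<or> w $ d = -1)"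
    (is "?signs \<longleftrightarrow> ?coords") for e
  proof
    assume ?coords
    then show ?signs
      by (intro exI[of _ "\<lambda>d. if d = e \<or> d = opp_edge e then 1 else w $ d"]) (auto simp: vec_eq_iff)
  qed auto
  then show ?thesis unfolding W_vectors_def by blast
qed

lemma mem_Dn_roots:
  "r \<in> Dn_roots \<longleftrightarrow> (\<exists>i j. i \<noteq> j \<and> r $ i = 1 \<and> (r $ j = 1 \<or> r $ j = -1) \<and>
     (\<forall>k. k \<noteq> i \<and> k \<noteq> j \<longrightarrow> r $ k = 0))" (is "_ \<longleftrightarrow> ?coords")
proof
  assume "r \<in> Dn_roots"
  then obtain i j \<sigma> where "i \<noteq> j" "\<sigma> = 1 \<or> \<sigma> = -1" "r = axis i 1 + \<sigma> *\<^sub>R axis j 1"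
    unfolding Dn_roots_def by blast
  then show ?coords
    by (intro exI[of _ i] exI[of _ j]) (auto simp: axis_def)
next
  assume ?coords
  then obtain i j where "i \<noteq> j" "r $ i = 1" "r $ j = 1 \<or> r $ j = -1" "\<forall>k. k \<noteq> i \<and> k \<noteq> j \<longrightarrow> r $ k = 0"
    by blast
  moreover from this have "r = axis i 1 + (r $ j) *\<^sub>R axis j 1"
    by (auto simp: vec_eq_iff axis_def)
  ultimately show "r \<in> Dn_roots"
    unfolding Dn_roots_def by blast
qed

definition sum_diff_mat :: "real^edge^6" where
  "sum_diff_mat = (\<chi> i e. if i = 1 then (if e = E12 \<or> e = E34 then 1 else 0)
     else if i = 2 then (if e = E12 then 1 else if e = E34 then -1 else 0)
     else if i = 3 then (if e = E13 \<or> e = E24 then 1 else 0)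
     else if i = 4 then (if e = E13 then 1 else if e = E24 then -1 else 0)
     else if i = 5 then (if e = E14 \<or> e = E23 then 1 else 0)
     else (if e = E14 then 1 else if e = E23 then -1 else 0))"

lemma sum_diff_mat_mult_vec:
  "(sum_diff_mat *v w) $ 1 = w $ E12 + w $ E34"
  "(sum_diff_mat *v w) $ 2 = w $ E12 - w $ E34"
  "(sum_diff_mat *v w) $ 3 = w $ E13 + w $ E24"
  "(sum_diff_mat *v w) $ 4 = w $ E13 - w $ E24"
  "(sum_diff_mat *v w) $ 5 = w $ E14 + w $ E23"
  "(sum_diff_mat *v w) $ 6 = w $ E14 - w $ E23"
  by (simp_all add: sum_diff_mat_def matrix_vector_mult_def sum_edge)

lemma vector_mult_sum_diff_mat:
  "(v v* sum_diff_mat) $ E12 = v $ 1 + v $ 2"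
  "(v v* sum_diff_mat) $ E34 = v $ 1 - v $ 2"
  "(v v* sum_diff_mat) $ E13 = v $ 3 + v $ 4"
  "(v v* sum_diff_mat) $ E24 = v $ 3 - v $ 4"
  "(v v* sum_diff_mat) $ E14 = v $ 5 + v $ 6"
  "(v v* sum_diff_mat) $ E23 = v $ 5 - v $ 6"
  by (simp_all add: sum_diff_mat_def vector_matrix_mult_def sum_6)

lemma transpose_sum_diff_mat_mult_self: "transpose sum_diff_mat ** sum_diff_mat = 2 *\<^sub>R mat 1"
  unfolding matrix_matrix_mult_def transpose_def sum_diff_mat_def mat_def
  by (simp add: vec_eq_iff sum_6 forall_edge)

lemma sum_diff_mat_mult_transpose_self: "sum_diff_mat ** transpose sum_diff_mat = 2 *\<^sub>R mat 1"
  unfolding matrix_matrix_mult_def transpose_def sum_diff_mat_def mat_def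
  by (simp add: vec_eq_iff sum_edge forall_6)

interpretation sum_diff: scaled_orthogonal sum_diff_mat 2
  by standard (simp_all add: transpose_sum_diff_mat_mult_self sum_diff_mat_mult_transpose_self)

lemma sum_diff_mat_W_vector:
  assumes "w \<in> W_vectors"
  shows "\<exists>c\<in>{1, 1/2, -1/2}. c *\<^sub>R (sum_diff_mat *v w) \<in> Dn_roots"
  using assms unfolding mem_W_vectors
proof (elim disjE exE conjE)
  fix e assume "w = axis e 1"
  then show ?thesis
    by (cases e) (simp_all add: mem_Dn_roots ex_6 forall_6 sum_diff_mat_mult_vec axis_def)
next
  fix e assume "w $ e = 0" "w $ opp_edge e = 0" "\<forall>d. d \<noteq> e \<and> d \<noteq> opp_edge e \<longrightarrow> w $ d = 1 \<or> w $ d = -1"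
  then show ?thesis
    by (cases e; simp add: forall_edge; elim conjE disjE;
        simp add: mem_Dn_roots ex_6 forall_6 sum_diff_mat_mult_vec)
qed

lemma transpose_sum_diff_mat_Dn_root:
  assumes "r \<in> Dn_roots"
  shows "\<exists>c\<in>{1, 1/2, -1/2}. c *\<^sub>R (transpose sum_diff_mat *v r) \<in> W_vectors"
proof -
  obtain i j :: 6 and \<sigma> where "i \<noteq> j" "\<sigma> = 1 \<or> \<sigma> = -1" "r = axis i 1 + \<sigma> *\<^sub>R axis j 1"
    using assms unfolding Dn_roots_def by blast
  then show ?thesis
    using exhaust_6[of i] exhaust_6[of j]
    by (elim disjE)
      (simp_all add: mem_W_vectors ex_edge forall_edge vec_eq_iff vector_mult_sum_diff_mat axis_def)
qed

lemma W_vectors_nonzero: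
  assumes "w \<in> W_vectors"
  shows "w \<noteq> 0"
proof
  assume "w = 0"
  obtain c where "c *\<^sub>R (sum_diff_mat *v w) \<in> Dn_roots"
    using sum_diff_mat_W_vector[OF assms] by blast
  with \<open>w = 0\<close> have "(0 :: real^6) \<in> Dn_roots" by simp
  then show False using Dn_roots_nonzero by blast
qed

lemma orthogonal_matrix_refl_mat_W_vectors: "B \<in> refl_mat ` W_vectors \<Longrightarrow> orthogonal_matrix B"
  using orthogonal_matrix_refl_mat W_vectors_nonzero by blast

lemma orthogonal_matrix_W_group: "A \<in> W_group \<Longrightarrow> A ** transpose A = mat 1"
  using orthogonal_matrix_gen_group[OF orthogonal_matrix_refl_mat_W_vectors]
  unfolding W_group_def orthogonal_matrix_def by blast

lemma transpose_in_W_group: "A \<in> W_group \<Longrightarrow> transpose A \<in> W_group"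
  unfolding W_group_def by (rule transpose_in_gen_group[OF orthogonal_matrix_refl_mat_W_vectors])

lemma refl_mat_sum_diff_W_vectors:
  "(\<lambda>w. refl_mat (sum_diff_mat *v w)) ` W_vectors = refl_mat ` Dn_roots"
proof
  show "(\<lambda>w. refl_mat (sum_diff_mat *v w)) ` W_vectors \<subseteq> refl_mat ` Dn_roots"
  proof clarify
    fix w assume "w \<in> W_vectors"
    then obtain c where "c \<in> {1, 1/2, -1/2}" and r: "c *\<^sub>R (sum_diff_mat *v w) \<in> Dn_roots"
      using sum_diff_mat_W_vector by blast
    then have "c \<noteq> 0" by auto
    then have "refl_mat (c *\<^sub>R (sum_diff_mat *v w)) = refl_mat (sum_diff_mat *v w)"
      by (rule refl_mat_scaleR)
    then show "refl_mat (sum_diff_mat *v w) \<in> refl_mat ` Dn_roots"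
      using r by (metis image_eqI)
  qed
  show "refl_mat ` Dn_roots \<subseteq> (\<lambda>w. refl_mat (sum_diff_mat *v w)) ` W_vectors"
  proof clarify
    fix r :: "real^6" assume "r \<in> Dn_roots"
    then obtain c where "c \<in> {1, 1/2, -1/2}" and w: "c *\<^sub>R (transpose sum_diff_mat *v r) \<in> W_vectors"
      using transpose_sum_diff_mat_Dn_root by blast
    then have "c \<noteq> 0" by auto
    have "sum_diff_mat *v (transpose sum_diff_mat *v r) = (2 *\<^sub>R mat 1) *v r"
      by (simp only: matrix_vector_mul_assoc sum_diff_mat_mult_transpose_self)
    then have "sum_diff_mat *v (c *\<^sub>R (transpose sum_diff_mat *v r)) = (2 * c) *\<^sub>R r"
      by (simp add: matrix_vector_mult_scaleR scaleR_mat_1_mult_vec)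
    then have "refl_mat r = refl_mat (sum_diff_mat *v (c *\<^sub>R (transpose sum_diff_mat *v r)))"
      using \<open>c \<noteq> 0\<close> by (simp add: refl_mat_scaleR)
    then show "refl_mat r \<in> (\<lambda>w. refl_mat (sum_diff_mat *v w)) ` W_vectors"
      using w by blast
  qed
qed

lemma D6_roots_eq_Dn_roots: "D6_roots = Dn_roots"
  unfolding D6_roots_def Dn_roots_def ..

lemma conj_W_group: "sum_diff.conj ` W_group = weyl_D6"
proof -
  have "sum_diff.conj ` W_group = gen_group (sum_diff.conj ` refl_mat ` W_vectors)"
    unfolding W_group_def
    by (rule sum_diff.conj_gen_group[OF orthogonal_matrix_refl_mat_W_vectors])
  also have "sum_diff.conj ` refl_mat ` W_vectors = refl_mat ` Dn_roots"
    unfolding image_image sum_diff.conj_refl_mat by (rule refl_mat_sum_diff_W_vectors)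
  finally show ?thesis
    unfolding weyl_D6_def D6_roots_eq_Dn_roots .
qed

lemma card_weyl_D6: "card weyl_D6 = 23040"
proof -
  have "weyl_D6 = (even_signed_perm_mats :: (real^6^6) set)"
    unfolding weyl_D6_def D6_roots_eq_Dn_roots by (rule gen_group_Dn_roots)
  then show ?thesis
    by (simp add: card_even_signed_perm_mats fact_numeral)
qed

section \<open>Invariance of the Cayley-Menger variety\<close>

definition CM_poly :: "(edge \<Rightarrow> complex) \<Rightarrow> complex" where
  "CM_poly q = (let a = q E14 + q E24 - q E12; b = q E14 + q E34 - q E13; c = q E24 + q E34 - q E23
     in 8 * q E14 * q E24 * q E34 + 2 * a * b * c - 2 * q E14 * c\<^sup>2 - 2 * q E24 * b\<^sup>2 - 2 * q E34 * a\<^sup>2)"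

lemma det_CM_matrix: "det (CM_matrix l) = CM_poly (\<lambda>e. (l $ e)\<^sup>2)"
  unfolding CM_matrix_def CM_poly_def Let_def det_3
  by (simp add: vector_3 power2_eq_square algebra_simps)

lemma CM_poly_half_sum_shift:
  fixes a q :: "edge \<Rightarrow> complex"
  shows "CM_poly (\<lambda>d. if d = e \<or> d = opp_edge e then q d
             else (a d - (\<Sum>f\<in>UNIV. if f = e \<or> f = opp_edge e then 0 else a f) / 2)\<^sup>2)
       = CM_poly (\<lambda>d. if d = e \<or> d = opp_edge e then q d else (a d)\<^sup>2)"
  unfolding CM_poly_def Let_def sum_edge
  by (induct e; simp only: edge.distinct opp_edge.simps simp_thms if_True if_False add_0 add_0_right; algebra)

lemma cact_mult: "cact (A ** B) l = cact A (cact B l)"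
proof -
  have "cact (A ** B) l $ i = cact A (cact B l) $ i" for i
  proof -
    have "cact (A ** B) l $ i
        = (\<Sum>j\<in>UNIV. \<Sum>k\<in>UNIV. complex_of_real (A $ i $ k) * (complex_of_real (B $ k $ j) * l $ j))"
      unfolding cact_def matrix_matrix_mult_def
      by (simp add: of_real_sum sum_distrib_right mult.assoc)
    also have "\<dots> = (\<Sum>k\<in>UNIV. \<Sum>j\<in>UNIV. complex_of_real (A $ i $ k) * (complex_of_real (B $ k $ j) * l $ j))"
      by (rule sum.swap)
    also have "\<dots> = cact A (cact B l) $ i"
      unfolding cact_def by (simp add: sum_distrib_left)
    finally show ?thesis .
  qed
  then show ?thesis by (simp add: vec_eq_iff)
qed

lemma cact_mat_1: "cact (mat 1) l = l"
  unfolding cact_def mat_def by (simp add: vec_eq_iff if_distrib if_distribR cong: if_cong)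

lemma cact_refl_mat:
  "cact (refl_mat v) l $ d =
     l $ d - complex_of_real (2 / (v \<bullet> v) * v $ d) * (\<Sum>j\<in>UNIV. complex_of_real (v $ j) * l $ j)"
proof -
  have "cact (refl_mat v) l $ d = (\<Sum>j\<in>UNIV. (if d = j then l $ j else 0)
       - complex_of_real (2 / (v \<bullet> v) * v $ d) * (complex_of_real (v $ j) * l $ j))"
    unfolding cact_def refl_mat_def vec_lambda_beta
    by (intro sum.cong) (auto simp: mat_def algebra_simps)
  then show ?thesis
    by (simp add: sum_subtractf sum_distrib_left)
qed

lemma det_CM_matrix_refl_W_vector:
  assumes "v \<in> W_vectors"
  shows "det (CM_matrix (cact (refl_mat v) l)) = det (CM_matrix l)"
proof -
  consider (axis) e where "v = axis e 1"
    | (four) e s where "\<forall>d. s d \<in> {1, -1::real}" "v = (\<chi> d. if d = e \<or> d = opp_edge e then 0 else s d)"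
    using assms unfolding W_vectors_def by blast
  then show ?thesis
  proof cases
    case axis
    have "v \<bullet> v = 1"
      unfolding axis by (simp add: inner_axis_axis)
    moreover have "(\<Sum>j\<in>UNIV. complex_of_real (v $ j) * l $ j) = l $ e"
      unfolding axis axis_def by (simp add: if_distrib if_distribR cong: if_cong)
    ultimately have "(cact (refl_mat v) l $ d)\<^sup>2 = (l $ d)\<^sup>2" for d
      unfolding cact_refl_mat by (cases "d = e") (simp_all add: axis axis_def power2_eq_square algebra_simps)
    then show ?thesis by (simp add: det_CM_matrix)
  next
    case four
    let ?M = "\<lambda>d. d = e \<or> d = opp_edge e"
    have s: "s d = 1 \<or> s d = -1" for d using four(1) by auto
    have "v \<bullet> v = 4"
    proof -
      have "s d * s d = 1" for d using s[of d] by auto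
      then show ?thesis unfolding four inner_vec_def by (cases e) (simp_all add: sum_edge)
    qed
    define a where "a d = complex_of_real (s d) * l $ d" for d
    define \<sigma> where "\<sigma> = (\<Sum>f\<in>UNIV. if ?M f then 0 else a f)"
    have sum: "(\<Sum>j\<in>UNIV. complex_of_real (v $ j) * l $ j) = \<sigma>"
      unfolding \<sigma>_def a_def four by (rule sum.cong) auto
    have reflected: "(cact (refl_mat v) l $ d)\<^sup>2 = (if ?M d then (l $ d)\<^sup>2 else (a d - \<sigma> / 2)\<^sup>2)" for d
      unfolding cact_refl_mat \<open>v \<bullet> v = 4\<close> sum
      using s[of d] by (auto simp: four a_def power2_eq_square algebra_simps)
    have "det (CM_matrix (cact (refl_mat v) l))
        = CM_poly (\<lambda>d. if ?M d then (l $ d)\<^sup>2 else (a d - \<sigma> / 2)\<^sup>2)"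
      unfolding det_CM_matrix reflected ..
    also have "\<dots> = CM_poly (\<lambda>d. if ?M d then (l $ d)\<^sup>2 else (a d)\<^sup>2)"
      unfolding \<sigma>_def by (rule CM_poly_half_sum_shift)
    also have "(\<lambda>d. if ?M d then (l $ d)\<^sup>2 else (a d)\<^sup>2) = (\<lambda>d. (l $ d)\<^sup>2)"
    proof (rule ext)
      fix d show "(if ?M d then (l $ d)\<^sup>2 else (a d)\<^sup>2) = (l $ d)\<^sup>2"
        using s[of d] by (auto simp: a_def power2_eq_square)
    qed
    finally show ?thesis
      by (simp add: det_CM_matrix)
  qed
qed

lemma det_CM_matrix_W_group:
  assumes "A \<in> W_group"
  shows "det (CM_matrix (cact A l)) = det (CM_matrix l)"
proof -
  have "W_group \<subseteq> {A. \<forall>l. det (CM_matrix (cact A l)) = det (CM_matrix l)}"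
    unfolding W_group_def
  proof (rule gen_group_subset[OF orthogonal_matrix_refl_mat_W_vectors])
    show "transpose A \<in> {A. \<forall>l. det (CM_matrix (cact A l)) = det (CM_matrix l)}"
      if "A \<in> {A. \<forall>l. det (CM_matrix (cact A l)) = det (CM_matrix l)}" "orthogonal_matrix A" for A
    proof (intro CollectI allI)
      fix l
      have "A ** transpose A = mat 1"
        using that(2) unfolding orthogonal_matrix_def by blast
      then have "det (CM_matrix l) = det (CM_matrix (cact A (cact (transpose A) l)))"
        by (simp add: cact_mat_1 flip: cact_mult)
      also have "\<dots> = det (CM_matrix (cact (transpose A) l))"
        using that(1) by blast
      finally show "det (CM_matrix (cact (transpose A) l)) = det (CM_matrix l)" ..
    qed
  qed (auto simp: det_CM_matrix_refl_W_vector cact_mat_1 cact_mult)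
  then show ?thesis using assms by blast
qed

lemma cact_W_group_L24:
  assumes "A \<in> W_group"
  shows "cact A ` L24 = L24"
proof
  show "cact A ` L24 \<subseteq> L24"
    using det_CM_matrix_W_group[OF assms] unfolding L24_def by auto
  show "L24 \<subseteq> cact A ` L24"
  proof
    fix l assume "l \<in> L24"
    have "cact (transpose A) l \<in> L24"
      using det_CM_matrix_W_group[OF transpose_in_W_group[OF assms]] \<open>l \<in> L24\<close>
      unfolding L24_def by auto
    moreover have "l = cact A (cact (transpose A) l)"
      using orthogonal_matrix_W_group[OF assms] by (simp add: cact_mat_1 flip: cact_mult)
    ultimately show "l \<in> cact A ` L24" by blast
  qed
qed

theorem lemma5p26:
  shows "card W_group = 23040
    \<and> (\<exists>f. bij_betw f W_group weyl_D6 \<and>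
           (\<forall>A\<in>W_group. \<forall>B\<in>W_group. f (A ** B) = f A ** f B))
    \<and> (\<forall>A\<in>W_group. cact A ` L24 = L24)"
proof (intro conjI)
  have bij: "bij_betw sum_diff.conj W_group weyl_D6"
    unfolding bij_betw_def using conj_W_group sum_diff.inj_conj by (blast intro: inj_on_subset)
  show "card W_group = 23040"
    using bij_betw_same_card[OF bij] card_weyl_D6 by simp
  show "\<exists>f. bij_betw f W_group weyl_D6 \<and> (\<forall>A\<in>W_group. \<forall>B\<in>W_group. f (A ** B) = f A ** f B)"
    using bij sum_diff.conj_mult by blast
  show "\<forall>A\<in>W_group. cact A ` L24 = L24"
    using cact_W_group_L24 by blast
qed

end
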